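(* Let $k, \mu, n$ be positive integers and $s$ a nonnegative integer such that $k^4\mu^4 n^4 - 16k(4\mu^2+n^2) = s^2$. Let $\beta$ be a positive integer. If $k^2\mu^2 n^2 - s = 2\beta$, then \[ \beta^3 + 64 = (\beta k\mu^2 - 4)(\beta k n^2 - 16) \] and $k$ divides $\beta^2$. If $k^2\mu^2 n^2 - s \geq 2\beta$, then $\beta^3 + 64 \geq (\beta k \mu^2 - 4)(\beta k n^2 - 16)$. *)

theory Defs
  imports Main
begin

end

theory Submission
  imports Defs
begin

(* With A = k^2 mu^2 n^2 and C = k (4 mu^2 + n^2) the hypothesis reads A^2 - s^2 = 16 C, so
   (A - s)/2 and (A + s)/2 are the roots of x^2 - A x + 4 C.  The right-hand side expands to
   beta (beta A - 4 C) + 64, which equals beta^3 + 64 when beta is the smaller root and is at most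
   beta^3 + 64 when beta lies below it.  Divisibility follows from beta^2 = beta A - 4 C. *)

lemma quadratic_factor_by_discriminant:
  fixes A s C b :: "'a::comm_ring_1"
  assumes "A^2 - s^2 = 16 * C"
  shows "4 * (b^2 - A * b + 4 * C) = (2 * b - A - s) * (2 * b - A + s)"
proof -
  have "16 * C = A^2 - s^2" using assms by simp
  then show ?thesis by (simp add: power2_eq_square algebra_simps)
qed

lemma smaller_root_eq:
  fixes A s C b :: "'a::linordered_idom"
  assumes "A^2 - s^2 = 16 * C" and "A - s = 2 * b"
  shows "b^2 = A * b - 4 * C"
proof -
  have "4 * (b^2 - A * b + 4 * C) = (2 * b - A - s) * (2 * b - A + s)"
    using assms(1) by (rule quadratic_factor_by_discriminant)
  also have "\<dots> = 0" using assms(2) by (simp add: algebra_simps)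
  finally have "4 * (b^2 - A * b + 4 * C) = 0" .
  then show ?thesis by (simp add: algebra_simps)
qed

lemma below_smaller_root_le:
  fixes A s C b :: "'a::linordered_idom"
  assumes "A^2 - s^2 = 16 * C" and "2 * b \<le> A - s" and "0 \<le> s"
  shows "A * b - 4 * C \<le> b^2"
proof -
  have "0 \<le> (2 * b - A - s) * (2 * b - A + s)"
    using assms(2,3) by (intro mult_nonpos_nonpos) auto
  also have "\<dots> = 4 * (b^2 - A * b + 4 * C)"
    using assms(1) by (rule quadratic_factor_by_discriminant[symmetric])
  finally have "0 \<le> 4 * (b^2 - A * b + 4 * C)" .
  then show ?thesis by simp
qed

lemma product_expansion:
  fixes k \<mu> n b :: "'a::comm_ring_1"
  shows "(b * k * \<mu>^2 - 4) * (b * k * n^2 - 16)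
           = b * (k^2 * \<mu>^2 * n^2 * b - 4 * (k * (4 * \<mu>^2 + n^2))) + 64"
  by (simp add: power2_eq_square algebra_simps)

theorem lemma6:
  fixes k \<mu> n s \<beta> :: int
  assumes "k > 0" and "\<mu> > 0" and "n > 0" and "s \<ge> 0"
    and "k^4 * \<mu>^4 * n^4 - 16 * k * (4 * \<mu>^2 + n^2) = s^2"
    and "\<beta> > 0"
  shows "(k^2 * \<mu>^2 * n^2 - s = 2 * \<beta> \<longrightarrow>
            \<beta>^3 + 64 = (\<beta> * k * \<mu>^2 - 4) * (\<beta> * k * n^2 - 16) \<and> k dvd \<beta>^2)
       \<and> (k^2 * \<mu>^2 * n^2 - s \<ge> 2 * \<beta> \<longrightarrow>
            \<beta>^3 + 64 \<ge> (\<beta> * k * \<mu>^2 - 4) * (\<beta> * k * n^2 - 16))"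
proof -
  define A where "A = k^2 * \<mu>^2 * n^2"
  define C where "C = k * (4 * \<mu>^2 + n^2)"
  have disc: "A^2 - s^2 = 16 * C"
    using assms(5) by (simp add: A_def C_def power_mult_distrib flip: power_mult)
  have rhs: "(\<beta> * k * \<mu>^2 - 4) * (\<beta> * k * n^2 - 16) = \<beta> * (A * \<beta> - 4 * C) + 64"
    unfolding A_def C_def by (rule product_expansion)
  have cube: "\<beta>^3 = \<beta> * \<beta>^2"
    by (simp add: power3_eq_cube power2_eq_square)
  have "\<beta>^3 + 64 = (\<beta> * k * \<mu>^2 - 4) * (\<beta> * k * n^2 - 16) \<and> k dvd \<beta>^2"
    if "A - s = 2 * \<beta>"
  proof -
    have root: "\<beta>^2 = A * \<beta> - 4 * C" using smaller_root_eq[OF disc that] .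
    have "k dvd A * \<beta> - 4 * C" by (simp add: A_def C_def power2_eq_square)
    then show ?thesis using root rhs cube by simp
  qed
  moreover have "\<beta>^3 + 64 \<ge> (\<beta> * k * \<mu>^2 - 4) * (\<beta> * k * n^2 - 16)"
    if "A - s \<ge> 2 * \<beta>"
  proof -
    have "A * \<beta> - 4 * C \<le> \<beta>^2" using below_smaller_root_le[OF disc that assms(4)] .
    then show ?thesis using rhs cube assms(6) by simp
  qed
  ultimately show ?thesis unfolding A_def by blast
qed

end
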